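(* Let $H,K,A_1,\ldots,A_n$ be groups such that $H\times K$ is a finite-index subgroup of $A_1\times\cdots\times A_n$. If $A_1,\ldots,A_n$ have almost stable centralisers and if $H$ is a non-cyclic group admitting an IMC generating set, then there exists an index $1\le i\le n$ such that $$H\leq \mathrm{VZ}(A_1)\times\cdots\times\mathrm{VZ}(A_{i-1})\times A_i\times\mathrm{VZ}(A_{i+1})\times\cdots\times\mathrm{VZ}(A_n).$$
   Context: A group $G$ has almost stable centralisers if for all $g\in G$ and $k\ge1$, the centraliser $C(g)$ has finite index in $C(g^k)$. A subset $S\subset G$ is an IMC generating set if it generates $G$ and satisfies: (Independence) for all distinct $s_1,s_2\in S$ and all integers $p,q\ge1$, $[s_1^p,s_2^q]\ne1$; (Maximal Centralisers) for all $s\in S$ and $g\in G$, if $C(s)\subsetneq C(g)$ then $g=1$. The virtual centre $\mathrm{VZ}(G)$ is the set of elements of $G$ centralising some finite-index subgroup of $G$. *)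

theory Defs
  imports "HOL-Algebra.Algebra"
begin

definition centraliser :: "('a, 'b) monoid_scheme \<Rightarrow> 'a \<Rightarrow> 'a set" where
  "centraliser G g = {h \<in> carrier G. h \<otimes>\<^bsub>G\<^esub> g = g \<otimes>\<^bsub>G\<^esub> h}"

definition finite_index :: "'a set \<Rightarrow> ('a, 'b) monoid_scheme \<Rightarrow> bool" where
  "finite_index S G \<longleftrightarrow> subgroup S G \<and> finite (rcosets\<^bsub>G\<^esub> S)"

definition almost_stable_centralisers :: "('a, 'b) monoid_scheme \<Rightarrow> bool" where
  "almost_stable_centralisers G \<longleftrightarrow>
     (\<forall>g \<in> carrier G. \<forall>k::nat. k \<ge> 1 \<longrightarrow>
        finite_index (centraliser G g) (G\<lparr>carrier := centraliser G (g [^]\<^bsub>G\<^esub> k)\<rparr>))"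

definition IMC_generating_set :: "('a, 'b) monoid_scheme \<Rightarrow> 'a set \<Rightarrow> bool" where
  "IMC_generating_set G S \<longleftrightarrow>
     S \<subseteq> carrier G \<and> generate G S = carrier G \<and>
     (\<forall>s1 \<in> S. \<forall>s2 \<in> S. s1 \<noteq> s2 \<longrightarrow> (\<forall>(p::nat) (q::nat). p \<ge> 1 \<longrightarrow> q \<ge> 1 \<longrightarrow>
        s1 [^]\<^bsub>G\<^esub> p \<otimes>\<^bsub>G\<^esub> s2 [^]\<^bsub>G\<^esub> q \<noteq> s2 [^]\<^bsub>G\<^esub> q \<otimes>\<^bsub>G\<^esub> s1 [^]\<^bsub>G\<^esub> p)) \<and>
     (\<forall>s \<in> S. \<forall>g \<in> carrier G. centraliser G s \<subset> centraliser G g \<longrightarrow> g = \<one>\<^bsub>G\<^esub>)"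

definition virtual_centre :: "('a, 'b) monoid_scheme \<Rightarrow> 'a set" where
  "virtual_centre G = {g \<in> carrier G. \<exists>F. finite_index F G \<and>
      (\<forall>f \<in> F. g \<otimes>\<^bsub>G\<^esub> f = f \<otimes>\<^bsub>G\<^esub> g)}"

end

theory Submission
  imports Defs
begin

text \<open>
  Write \<open>u\<^sub>i\<close> for the \<open>i\<close>-th coordinate of \<open>(u, 1)\<close>. Since \<open>H \<times> K\<close> has finite index,
  for a generator \<open>s\<close> of the IMC set some power \<open>s\<^sub>i\<^sup>m\<close>, placed in the \<open>i\<close>-th factor, is the
  image of some \<open>q \<in> H \<times> K\<close>. If \<open>s\<^sub>i\<close> is not virtually central, the \<open>H\<close>-component of \<open>q\<close> is
  non-trivial: otherwise \<open>s\<^sub>i\<^sup>m\<close> would centralise the finite-index projection of \<open>H \<times> K\<close> to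
  \<open>A\<^sub>i\<close>, and almost stable centralisers would make \<open>s\<^sub>i\<close> virtually central. As \<open>C(s)\<close> lies in
  the centraliser of that component, maximality of centralisers makes the two equal. Elements
  supported in different factors commute, so two distinct generators that are not virtually
  central at two different indices would commute, contradicting independence; and if one
  generator is not virtually central at \<open>i\<close>, neither is any other. Hence a single index carries
  all non-virtually-central coordinates of the generators, and the elements of \<open>H\<close> that are
  virtually central at every other index form a subgroup containing the generators.
\<close>

lemma set_mult_eq_UN_r_coset: "F <#>\<^bsub>G\<^esub> R = (\<Union>r\<in>R. F #>\<^bsub>G\<^esub> r)"
  by (auto simp: set_mult_def r_coset_def)

lemma (in group) finite_index_iff_transversal:
  assumes "subgroup F G"
  shows "finite_index F G \<longleftrightarrow> (\<exists>R. finite R \<and> R \<subseteq> carrier G \<and> F <#> R = carrier G)"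
proof
  assume "finite_index F G"
  then have fin: "finite (rcosets F)" by (simp add: finite_index_def)
  define R where "R = (\<lambda>Q. SOME x. x \<in> Q) ` (rcosets F)"
  have rep: "(SOME x. x \<in> Q) \<in> Q" "F #> (SOME x. x \<in> Q) = Q" if Q: "Q \<in> rcosets F" for Q
  proof -
    show x: "(SOME x. x \<in> Q) \<in> Q"
      using subgroup.rcosets_non_empty[OF assms Q] by (simp add: some_in_eq)
    obtain g where "g \<in> carrier G" "Q = F #> g" using Q by (auto simp: RCOSETS_def)
    then show "F #> (SOME x. x \<in> Q) = Q"
      using repr_independence[OF _ _ assms] x by simp
  qed
  have "R \<subseteq> carrier G"
    using rep(1) subgroup.rcosets_carrier[OF assms is_group] by (auto simp: R_def)
  moreover have "F <#> R = carrier G"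
    using rep(2) rcosets_part_G[OF assms] by (simp add: set_mult_eq_UN_r_coset R_def)
  ultimately show "\<exists>R. finite R \<and> R \<subseteq> carrier G \<and> F <#> R = carrier G"
    using fin by (auto simp: R_def)
next
  assume "\<exists>R. finite R \<and> R \<subseteq> carrier G \<and> F <#> R = carrier G"
  then obtain R where R: "finite R" "R \<subseteq> carrier G" "F <#> R = carrier G" by blast
  have "rcosets F \<subseteq> (\<lambda>r. F #> r) ` R"
  proof
    fix Q assume "Q \<in> rcosets F"
    then obtain x where x: "x \<in> carrier G" "Q = F #> x" by (auto simp: RCOSETS_def)
    then obtain r where r: "r \<in> R" "x \<in> F #> r"
      using R(3) by (auto simp: set_mult_eq_UN_r_coset)
    then have "F #> r = F #> x" using repr_independence[OF _ _ assms] R(2) by blast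
    then show "Q \<in> (\<lambda>r. F #> r) ` R" using x r by blast
  qed
  then show "finite_index F G"
    using assms R(1) finite_surj by (auto simp: finite_index_def)
qed

lemma (in group) finite_index_superset:
  assumes "finite_index F G" "subgroup C G" "F \<subseteq> C"
  shows "finite_index C G"
proof -
  have F: "subgroup F G" using assms(1) by (simp add: finite_index_def)
  obtain R where R: "finite R" "R \<subseteq> carrier G" "F <#> R = carrier G"
    using assms(1) finite_index_iff_transversal[OF F] by blast
  have "C <#> R = carrier G"
    using mono_set_mult[OF assms(3), of R R G] R setmult_subset_G[OF subgroup.subset[OF assms(2)] R(2)]
    by blast
  then show ?thesis using finite_index_iff_transversal[OF assms(2)] R(1,2) by blast
qed

lemma (in group) finite_index_trans:
  assumes "finite_index F (G\<lparr>carrier := C\<rparr>)" "finite_index C G"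
  shows "finite_index F G"
proof -
  have C: "subgroup C G" using assms(2) by (simp add: finite_index_def)
  interpret C: group "G\<lparr>carrier := C\<rparr>" using subgroup.subgroup_is_group[OF C is_group] .
  have FC: "subgroup F (G\<lparr>carrier := C\<rparr>)" using assms(1) by (simp add: finite_index_def)
  have F: "subgroup F G" using incl_subgroup[OF C FC] .
  obtain R1 where R1: "finite R1" "R1 \<subseteq> carrier G" "C <#> R1 = carrier G"
    using assms(2) finite_index_iff_transversal[OF C] by blast
  obtain R2 where R2: "finite R2" "R2 \<subseteq> C" "F <#> R2 = C"
    using assms(1) C.finite_index_iff_transversal[OF FC] by auto
  have "F <#> (R2 <#> R1) = carrier G"
    using set_mult_assoc[of F R2 R1] subgroup.subset[OF F] subgroup.subset[OF C] R1 R2 by auto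
  moreover have "finite (R2 <#> R1)" using R1(1) R2(1) by (simp add: set_mult_def)
  moreover have "R2 <#> R1 \<subseteq> carrier G"
    using setmult_subset_G R1(2) R2(2) subgroup.subset[OF C] by blast
  ultimately show ?thesis using finite_index_iff_transversal[OF F] by blast
qed

lemma (in group) finite_index_nat_pow:
  assumes "finite_index F G" "x \<in> carrier G"
  shows "\<exists>m::nat. m \<ge> 1 \<and> x [^] m \<in> F"
proof -
  have F: "subgroup F G" and fin: "finite (rcosets F)" using assms(1) by (auto simp: finite_index_def)
  have "range (\<lambda>k::nat. F #> x [^] k) \<subseteq> rcosets F"
    using rcosetsI[OF subgroup.subset[OF F]] assms(2) by auto
  then have "finite (range (\<lambda>k::nat. F #> x [^] k))" using fin finite_subset by blast
  then have "\<not> inj (\<lambda>k::nat. F #> x [^] k)" using finite_imageD infinite_UNIV_nat by blast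
  then obtain a b :: nat where ab: "a < b" "F #> x [^] a = F #> x [^] b"
    unfolding inj_def by (metis linorder_neqE_nat)
  have "x [^] b \<in> F #> x [^] a" using ab(2) rcos_self[OF _ F] assms(2) by simp
  then have "x [^] b \<otimes> inv (x [^] a) \<in> F"
    using subgroup.rcos_module_imp[OF F is_group] assms(2) by simp
  moreover have "x [^] b = x [^] (b - a) \<otimes> x [^] a"
    using nat_pow_mult[OF assms(2), of "b - a" a] ab(1) by simp
  ultimately have "x [^] (b - a) \<in> F" using assms(2) by (simp add: m_assoc)
  then show ?thesis using ab(1) by (intro exI[of _ "b - a"]) simp
qed

lemma (in group) finite_index_Int:
  assumes "finite_index F1 G" "finite_index F2 G"
  shows "finite_index (F1 \<inter> F2) G"
proof -
  have F: "subgroup F1 G" "subgroup F2 G" using assms by (auto simp: finite_index_def)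
  have "(F1 \<inter> F2) #> x = (F1 #> x) \<inter> (F2 #> x)" if x: "x \<in> carrier G" for x
  proof (intro equalityI subsetI)
    fix y assume "y \<in> (F1 #> x) \<inter> (F2 #> x)"
    then obtain f1 f2 where f: "f1 \<in> F1" "f2 \<in> F2" "y = f1 \<otimes> x" "y = f2 \<otimes> x"
      unfolding r_coset_def by blast
    then have "f1 = f2" using x subgroup.mem_carrier[OF F(1)] subgroup.mem_carrier[OF F(2)] r_cancel by metis
    then show "y \<in> (F1 \<inter> F2) #> x" using f unfolding r_coset_def by blast
  qed (auto simp: r_coset_def)
  then have "rcosets (F1 \<inter> F2) \<subseteq> (\<lambda>(Q1, Q2). Q1 \<inter> Q2) ` ((rcosets F1) \<times> (rcosets F2))"
    using rcosetsI[OF subgroup.subset[OF F(1)]] rcosetsI[OF subgroup.subset[OF F(2)]]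
    by (force simp: RCOSETS_def)
  moreover have "finite ((rcosets F1) \<times> (rcosets F2))" using assms by (simp add: finite_index_def)
  ultimately show ?thesis
    using subgroups_Inter_pair[OF F] finite_surj unfolding finite_index_def by blast
qed

lemma (in group_hom) subgroup_vimage:
  assumes "subgroup F H"
  shows "subgroup (carrier G \<inter> h -` F) G"
proof (rule G.subgroupI)
  show "carrier G \<inter> h -` F \<noteq> {}"
  proof -
    have "\<one> \<in> carrier G \<inter> h -` F" using subgroup.one_closed[OF assms] by simp
    then show ?thesis by blast
  qed
  show "inv a \<in> carrier G \<inter> h -` F" if "a \<in> carrier G \<inter> h -` F" for a
    using that subgroup.m_inv_closed[OF assms] by simp
  show "a \<otimes> b \<in> carrier G \<inter> h -` F" if "a \<in> carrier G \<inter> h -` F" "b \<in> carrier G \<inter> h -` F" for a b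
    using that subgroup.m_closed[OF assms] by simp
qed blast

lemma (in group_hom) finite_index_image:
  assumes "finite_index F G" "h ` carrier G = carrier H"
  shows "finite_index (h ` F) H"
proof -
  have F: "subgroup F G" using assms(1) by (simp add: finite_index_def)
  obtain R where R: "finite R" "R \<subseteq> carrier G" "F <#> R = carrier G"
    using assms(1) G.finite_index_iff_transversal[OF F] by blast
  have "h ` F <#>\<^bsub>H\<^esub> h ` R = carrier H"
    using set_mult_hom[OF homh subgroup.subset[OF F] R(2)] R(3) assms(2) by simp
  moreover have "finite (h ` R)" "h ` R \<subseteq> carrier H" using R(1,2) by auto
  ultimately show ?thesis
    using H.finite_index_iff_transversal[OF subgroup_img_is_subgroup[OF F]] by blast
qed

lemma (in group_hom) finite_index_vimage:
  assumes "finite_index F H"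
  shows "finite_index (carrier G \<inter> h -` F) G"
proof -
  have F: "subgroup F H" using assms by (simp add: finite_index_def)
  have "(carrier G \<inter> h -` F) #> x = carrier G \<inter> h -` (F #>\<^bsub>H\<^esub> h x)" if x: "x \<in> carrier G" for x
  proof -
    have "y \<in> (carrier G \<inter> h -` F) #> x \<longleftrightarrow> h y \<in> F #>\<^bsub>H\<^esub> h x" if "y \<in> carrier G" for y
      using subgroup.rcos_module[OF subgroup_vimage[OF F] G.is_group x that]
        subgroup.rcos_module[OF F H.is_group] x that by simp
    then show ?thesis
      using G.r_coset_subset_G[of "carrier G \<inter> h -` F" x] x by blast
  qed
  then have "rcosets (carrier G \<inter> h -` F) \<subseteq> (\<lambda>Q. carrier G \<inter> h -` Q) ` (rcosets\<^bsub>H\<^esub> F)"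
    using H.rcosetsI[OF subgroup.subset[OF F]] unfolding RCOSETS_def[of G] by force
  moreover have "finite (rcosets\<^bsub>H\<^esub> F)" using assms by (simp add: finite_index_def)
  ultimately show ?thesis
    using subgroup_vimage[OF F] finite_surj unfolding finite_index_def by blast
qed

lemma (in group) finite_index_carrier: "finite_index (carrier G) G"
proof -
  have "carrier G <#> {\<one>} = carrier G" by (simp add: r_coset_eq_set_mult[symmetric])
  then show ?thesis
    unfolding finite_index_iff_transversal[OF subgroup_self] by (intro exI[of _ "{\<one>}"]) simp
qed

lemma (in group) mem_centraliser_sym:
  assumes "g \<in> carrier G" "h \<in> carrier G"
  shows "h \<in> centraliser G g \<longleftrightarrow> g \<in> centraliser G h"
  using assms by (simp add: centraliser_def eq_commute)

lemma (in group) centraliser_subgroup: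
  assumes "g \<in> carrier G"
  shows "subgroup (centraliser G g) G"
proof (rule subgroupI)
  show "centraliser G g \<subseteq> carrier G" by (auto simp: centraliser_def)
  show "centraliser G g \<noteq> {}" using assms by (auto simp: centraliser_def intro!: exI[of _ \<one>])
  show "inv a \<in> centraliser G g" if "a \<in> centraliser G g" for a
  proof -
    have a: "a \<in> carrier G" "g \<otimes> a = a \<otimes> g" using that by (auto simp: centraliser_def)
    have "inv a \<otimes> g = inv a \<otimes> (g \<otimes> a) \<otimes> inv a" using a(1) assms by (simp add: m_assoc)
    also have "\<dots> = g \<otimes> inv a" using a assms by (simp only: a(2)) (simp add: m_assoc[symmetric])
    finally show ?thesis using a by (simp add: centraliser_def)
  qed
  show "a \<otimes> b \<in> centraliser G g" if "a \<in> centraliser G g" "b \<in> centraliser G g" for a b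
  proof -
    have ab: "a \<in> carrier G" "a \<otimes> g = g \<otimes> a" "b \<in> carrier G" "b \<otimes> g = g \<otimes> b"
      using that by (auto simp: centraliser_def)
    then have "a \<otimes> b \<otimes> g = g \<otimes> (a \<otimes> b)"
      using assms by (simp only: m_assoc ab(4)) (simp only: m_assoc[symmetric] ab(2))
    then show ?thesis using ab by (simp add: centraliser_def)
  qed
qed

lemma (in group) centraliser_subset_centraliser_nat_pow:
  assumes "g \<in> carrier G"
  shows "centraliser G g \<subseteq> centraliser G (g [^] (k::nat))"
  using assms group_commutes_pow by (auto simp: centraliser_def)

lemma (in group) virtual_centre_iff:
  "g \<in> virtual_centre G \<longleftrightarrow> g \<in> carrier G \<and> finite_index (centraliser G g) G"
proof
  assume "g \<in> virtual_centre G"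
  then obtain F where g: "g \<in> carrier G" and F: "finite_index F G" "\<forall>f\<in>F. g \<otimes> f = f \<otimes> g"
    unfolding virtual_centre_def by blast
  have "F \<subseteq> carrier G" using F(1) subgroup.subset by (auto simp: finite_index_def)
  then have "F \<subseteq> centraliser G g" using F(2) by (auto simp: centraliser_def)
  then show "g \<in> carrier G \<and> finite_index (centraliser G g) G"
    using g F(1) finite_index_superset centraliser_subgroup by blast
next
  assume "g \<in> carrier G \<and> finite_index (centraliser G g) G"
  moreover have "\<forall>f\<in>centraliser G g. g \<otimes> f = f \<otimes> g" by (simp add: centraliser_def)
  ultimately show "g \<in> virtual_centre G" unfolding virtual_centre_def by blast
qed

lemma (in group) centraliser_subset_centraliser_inv:
  assumes "x \<in> carrier G"
  shows "centraliser G x \<subseteq> centraliser G (inv x)"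
proof
  fix h assume h: "h \<in> centraliser G x"
  then have hG: "h \<in> carrier G" by (simp add: centraliser_def)
  then have "x \<in> centraliser G h" using h assms mem_centraliser_sym by blast
  then have "inv x \<in> centraliser G h" using subgroup.m_inv_closed[OF centraliser_subgroup[OF hG]] by blast
  then show "h \<in> centraliser G (inv x)" using hG assms mem_centraliser_sym by blast
qed

lemma (in group) centraliser_Int_subset_centraliser_mult:
  assumes "x \<in> carrier G" "y \<in> carrier G"
  shows "centraliser G x \<inter> centraliser G y \<subseteq> centraliser G (x \<otimes> y)"
proof
  fix h assume h: "h \<in> centraliser G x \<inter> centraliser G y"
  then have hG: "h \<in> carrier G" by (simp add: centraliser_def)
  then have "x \<in> centraliser G h" "y \<in> centraliser G h" using h assms mem_centraliser_sym by blast+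
  then have "x \<otimes> y \<in> centraliser G h" using subgroup.m_closed[OF centraliser_subgroup[OF hG]] by blast
  then show "h \<in> centraliser G (x \<otimes> y)" using hG assms mem_centraliser_sym by blast
qed

lemma (in group) virtual_centre_subgroup: "subgroup (virtual_centre G) G"
proof (rule subgroupI)
  show "virtual_centre G \<subseteq> carrier G" unfolding virtual_centre_def by blast
  have "centraliser G \<one> = carrier G" by (auto simp: centraliser_def)
  then have "\<one> \<in> virtual_centre G" using virtual_centre_iff finite_index_carrier by simp
  then show "virtual_centre G \<noteq> {}" by blast
  show "inv x \<in> virtual_centre G" if "x \<in> virtual_centre G" for x
  proof -
    have x: "x \<in> carrier G" "finite_index (centraliser G x) G" using that virtual_centre_iff by blast+
    then have "finite_index (centraliser G (inv x)) G"
      using finite_index_superset centraliser_subgroup centraliser_subset_centraliser_inv by blast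
    then show ?thesis using x(1) virtual_centre_iff by blast
  qed
  show "x \<otimes> y \<in> virtual_centre G" if "x \<in> virtual_centre G" "y \<in> virtual_centre G" for x y
  proof -
    have xy: "x \<in> carrier G" "y \<in> carrier G" "finite_index (centraliser G x \<inter> centraliser G y) G"
      using that virtual_centre_iff finite_index_Int by blast+
    then have "finite_index (centraliser G (x \<otimes> y)) G"
      using finite_index_superset centraliser_subgroup centraliser_Int_subset_centraliser_mult by blast
    then show ?thesis using xy(1,2) virtual_centre_iff by blast
  qed
qed

lemma (in group) virtual_centre_of_nat_pow:
  assumes "almost_stable_centralisers G" "u \<in> carrier G" "k \<ge> 1" "u [^] (k::nat) \<in> virtual_centre G"
  shows "u \<in> virtual_centre G"
proof -
  have "finite_index (centraliser G u) (G\<lparr>carrier := centraliser G (u [^] k)\<rparr>)"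
    using assms(1-3) unfolding almost_stable_centralisers_def by blast
  then show ?thesis
    using assms(2,4) finite_index_trans virtual_centre_iff by blast
qed

lemma (in group_hom) centraliser_image_subset:
  assumes "x \<in> carrier G"
  shows "h ` centraliser G x \<subseteq> centraliser H (h x)"
proof
  fix y assume "y \<in> h ` centraliser G x"
  then obtain g where g: "g \<in> carrier G" "g \<otimes>\<^bsub>G\<^esub> x = x \<otimes>\<^bsub>G\<^esub> g" "y = h g"
    by (auto simp: centraliser_def)
  then have "h g \<otimes>\<^bsub>H\<^esub> h x = h x \<otimes>\<^bsub>H\<^esub> h g" using assms by (metis hom_mult)
  then show "y \<in> centraliser H (h x)" using g(1,3) by (simp add: centraliser_def)
qed

lemma commute_if_inj_hom_image_commute:
  assumes "f \<in> hom G G'" "inj_on f (carrier G)" "monoid G" "x \<in> carrier G" "y \<in> carrier G"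
    and "f x \<otimes>\<^bsub>G'\<^esub> f y = f y \<otimes>\<^bsub>G'\<^esub> f x"
  shows "x \<otimes>\<^bsub>G\<^esub> y = y \<otimes>\<^bsub>G\<^esub> x"
proof -
  have "f (x \<otimes>\<^bsub>G\<^esub> y) = f (y \<otimes>\<^bsub>G\<^esub> x)" using assms(1,4-6) by (simp add: hom_mult)
  then show ?thesis using assms(2-5) by (simp add: inj_on_eq_iff monoid.m_closed)
qed

definition single_entry :: "'i set \<Rightarrow> ('i \<Rightarrow> ('a, 'b) monoid_scheme) \<Rightarrow> 'i \<Rightarrow> 'a \<Rightarrow> 'i \<Rightarrow> 'a" where
  "single_entry I A i a = (\<lambda>l\<in>I. if l = i then a else \<one>\<^bsub>A l\<^esub>)"

lemma single_entry_apply [simp]: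
  "l \<in> I \<Longrightarrow> single_entry I A i a l = (if l = i then a else \<one>\<^bsub>A l\<^esub>)"
  by (simp add: single_entry_def)

lemma single_entry_hom:
  assumes "\<And>l. l \<in> I \<Longrightarrow> group (A l)" "i \<in> I"
  shows "single_entry I A i \<in> hom (A i) (product_group I A)"
proof (rule homI)
  show "single_entry I A i a \<in> carrier (product_group I A)" if "a \<in> carrier (A i)" for a
    using assms that by (auto simp: single_entry_def group.is_monoid)
  show "single_entry I A i (a \<otimes>\<^bsub>A i\<^esub> b)
      = single_entry I A i a \<otimes>\<^bsub>product_group I A\<^esub> single_entry I A i b"
    if "a \<in> carrier (A i)" "b \<in> carrier (A i)" for a b
    using assms by (auto simp: single_entry_def group.is_monoid intro!: restrict_ext)
qed

lemma product_group_proj_hom: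
  assumes "i \<in> I"
  shows "(\<lambda>f. f i) \<in> hom (product_group I A) (A i)"
  using assms by (auto intro!: homI simp: PiE_iff)

lemma product_group_proj_surj:
  assumes "\<And>l. l \<in> I \<Longrightarrow> group (A l)" "i \<in> I"
  shows "(\<lambda>f. f i) ` carrier (product_group I A) = carrier (A i)"
proof (intro equalityI subsetI)
  fix a assume "a \<in> carrier (A i)"
  then have "single_entry I A i a \<in> carrier (product_group I A)"
    using hom_in_carrier[OF single_entry_hom[of I A i, OF assms]] by blast
  moreover have "single_entry I A i a i = a" using assms(2) by simp
  ultimately show "a \<in> (\<lambda>f. f i) ` carrier (product_group I A)" by (metis image_eqI)
qed (use assms(2) in \<open>auto simp: PiE_iff\<close>)

lemma commute_single_entry_iff:
  assumes "\<And>l. l \<in> I \<Longrightarrow> group (A l)" "i \<in> I"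
    and "f \<in> carrier (product_group I A)" "a \<in> carrier (A i)"
  shows "f \<otimes>\<^bsub>product_group I A\<^esub> single_entry I A i a = single_entry I A i a \<otimes>\<^bsub>product_group I A\<^esub> f
    \<longleftrightarrow> f i \<otimes>\<^bsub>A i\<^esub> a = a \<otimes>\<^bsub>A i\<^esub> f i"
proof
  assume "f \<otimes>\<^bsub>product_group I A\<^esub> single_entry I A i a = single_entry I A i a \<otimes>\<^bsub>product_group I A\<^esub> f"
  then have "(f \<otimes>\<^bsub>product_group I A\<^esub> single_entry I A i a) i = (single_entry I A i a \<otimes>\<^bsub>product_group I A\<^esub> f) i"
    by (rule arg_cong)
  then show "f i \<otimes>\<^bsub>A i\<^esub> a = a \<otimes>\<^bsub>A i\<^esub> f i" using assms(2) by simp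
next
  assume comm: "f i \<otimes>\<^bsub>A i\<^esub> a = a \<otimes>\<^bsub>A i\<^esub> f i"
  have "f l \<otimes>\<^bsub>A l\<^esub> single_entry I A i a l = single_entry I A i a l \<otimes>\<^bsub>A l\<^esub> f l" if "l \<in> I" for l
  proof (cases "l = i")
    case False
    then show ?thesis using that assms(1,3) by (simp add: PiE_iff group.is_monoid)
  qed (use comm that in simp)
  then have "(\<lambda>l\<in>I. f l \<otimes>\<^bsub>A l\<^esub> single_entry I A i a l) = (\<lambda>l\<in>I. single_entry I A i a l \<otimes>\<^bsub>A l\<^esub> f l)"
    by (rule restrict_ext)
  then show "f \<otimes>\<^bsub>product_group I A\<^esub> single_entry I A i a = single_entry I A i a \<otimes>\<^bsub>product_group I A\<^esub> f"
    by (simp only: mult_product_group)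
qed

lemma (in group) IMC_generating_set_not_centraliser:
  assumes "IMC_generating_set G S" "s \<in> S" "t \<in> S" "s \<noteq> t"
  shows "s \<notin> centraliser G t"
proof -
  have "s [^] (1::nat) \<otimes> t [^] (1::nat) \<noteq> t [^] (1::nat) \<otimes> s [^] (1::nat)"
    using assms unfolding IMC_generating_set_def by blast
  moreover have "s \<in> carrier G" "t \<in> carrier G" using assms unfolding IMC_generating_set_def by blast+
  ultimately show ?thesis by (simp add: centraliser_def)
qed

lemma (in group) IMC_generating_set_two_elements:
  assumes "\<not> cyclic_group G" "IMC_generating_set G S"
  shows "\<exists>s\<in>S. \<exists>t\<in>S. s \<noteq> t"
proof (rule ccontr)
  assume "\<not> (\<exists>s\<in>S. \<exists>t\<in>S. s \<noteq> t)"
  moreover have S: "S \<subseteq> carrier G" "generate G S = carrier G"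
    using assms(2) unfolding IMC_generating_set_def by blast+
  ultimately obtain x where x: "x \<in> carrier G" "S \<subseteq> {x}"
    by (cases "S = {}") blast+
  have "generate G {x} = carrier G"
    using mono_generate[OF x(2)] generate_in_carrier[of "{x}"] x(1) S(2) by blast
  then have "subgroup_generated G {x} = G" using x(1) by (simp add: subgroup_generated_def)
  then show False using assms(1) cyclic_group_alt by blast
qed

locale finite_index_embedding =
  fixes H :: "('h, 'c) monoid_scheme" and K :: "('k, 'd) monoid_scheme"
    and I :: "'i set" and A :: "'i \<Rightarrow> ('a, 'e) monoid_scheme"
    and \<phi> :: "'h \<times> 'k \<Rightarrow> 'i \<Rightarrow> 'a"
  assumes group_H: "group H" and group_K: "group K"
    and group_A: "\<And>i. i \<in> I \<Longrightarrow> group (A i)"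
    and hom_\<phi>: "\<phi> \<in> hom (H \<times>\<times> K) (product_group I A)"
    and inj_\<phi>: "inj_on \<phi> (carrier (H \<times>\<times> K))"
    and finite_index_range: "finite_index (\<phi> ` carrier (H \<times>\<times> K)) (product_group I A)"
begin

abbreviation coord :: "'h \<Rightarrow> 'i \<Rightarrow> 'a" where
  "coord u i \<equiv> \<phi> (u, \<one>\<^bsub>K\<^esub>) i"

lemma group_HK: "group (H \<times>\<times> K)"
  using group_H group_K by (rule DirProd_group)

lemma group_product: "group (product_group I A)"
  using group_A by simp

lemma component_hom: "i \<in> I \<Longrightarrow> group_hom (H \<times>\<times> K) (A i) (\<lambda>p. \<phi> p i)"
  using hom_\<phi> group_HK group_A
  by (auto simp: group_hom_def group_hom_axioms_def hom_def PiE_iff)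

lemma coord_hom:
  assumes "i \<in> I"
  shows "group_hom H (A i) (\<lambda>u. coord u i)"
proof -
  interpret \<pi>: group_hom "H \<times>\<times> K" "A i" "\<lambda>p. \<phi> p i" using component_hom[OF assms] .
  have "(\<lambda>u. coord u i) \<in> hom H (A i)"
  proof (rule homI)
    fix x y assume "x \<in> carrier H" "y \<in> carrier H"
    then have "(x, \<one>\<^bsub>K\<^esub>) \<in> carrier (H \<times>\<times> K)" "(y, \<one>\<^bsub>K\<^esub>) \<in> carrier (H \<times>\<times> K)"
      using group_K by (simp_all add: group.is_monoid)
    then show "coord (x \<otimes>\<^bsub>H\<^esub> y) i = coord x i \<otimes>\<^bsub>A i\<^esub> coord y i"
      using \<pi>.hom_mult group_K by (fastforce simp: group.is_monoid)
  qed (use group_K in \<open>simp add: group.is_monoid\<close>)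
  then show ?thesis
    using group_H group_A[OF assms] by (simp add: group_hom_def group_hom_axioms_def)
qed

lemma fst_mem_centraliser_if_images_commute:
  assumes "p \<in> carrier (H \<times>\<times> K)" "q \<in> carrier (H \<times>\<times> K)"
    and "\<phi> p \<otimes>\<^bsub>product_group I A\<^esub> \<phi> q = \<phi> q \<otimes>\<^bsub>product_group I A\<^esub> \<phi> p"
  shows "fst p \<in> centraliser H (fst q)"
proof -
  have "p \<otimes>\<^bsub>H \<times>\<times> K\<^esub> q = q \<otimes>\<^bsub>H \<times>\<times> K\<^esub> p"
    using commute_if_inj_hom_image_commute[OF hom_\<phi> inj_\<phi> group.is_monoid[OF group_HK]] assms
    by blast
  then show ?thesis using assms(1) by (cases p, cases q) (simp add: centraliser_def)
qed

text \<open>The intersection of \<open>H \<times> K\<close> with the factor \<open>A\<^sub>i\<close>, seen inside the product.\<close>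

definition slice :: "'i \<Rightarrow> 'a set" where
  "slice i = carrier (A i) \<inter> single_entry I A i -` \<phi> ` carrier (H \<times>\<times> K)"

lemma finite_index_slice:
  assumes "i \<in> I"
  shows "finite_index (slice i) (A i)"
proof -
  have "group_hom (A i) (product_group I A) (single_entry I A i)"
    using single_entry_hom[of I A i, OF group_A assms] group_A[OF assms] group_product
    by (simp add: group_hom_def group_hom_axioms_def)
  then show ?thesis
    using group_hom.finite_index_vimage[OF _ finite_index_range] by (simp add: slice_def)
qed

lemma finite_index_component_range:
  assumes "i \<in> I"
  shows "finite_index ((\<lambda>p. \<phi> p i) ` carrier (H \<times>\<times> K)) (A i)"
proof -
  have "group_hom (product_group I A) (A i) (\<lambda>f. f i)"
    using product_group_proj_hom[OF assms] group_product group_A[OF assms]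
    by (simp add: group_hom_def group_hom_axioms_def)
  then have "finite_index ((\<lambda>f. f i) ` \<phi> ` carrier (H \<times>\<times> K)) (A i)"
    using group_hom.finite_index_image[OF _ finite_index_range]
      product_group_proj_surj[of I A, OF group_A assms] by blast
  then show ?thesis by (simp add: image_image)
qed

lemma centraliser_subset_centraliser_fst:
  assumes "u \<in> carrier H" "i \<in> I" "q \<in> carrier (H \<times>\<times> K)"
    and "\<phi> q = single_entry I A i (coord u i [^]\<^bsub>A i\<^esub> (m::nat))"
  shows "centraliser H u \<subseteq> centraliser H (fst q)"
proof
  fix x assume x: "x \<in> centraliser H u"
  interpret Ai: group "A i" using group_A[OF assms(2)] .
  interpret coord: group_hom H "A i" "\<lambda>u. coord u i" using coord_hom[OF assms(2)] .
  have xK: "(x, \<one>\<^bsub>K\<^esub>) \<in> carrier (H \<times>\<times> K)"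
    using x group_K by (simp add: centraliser_def group.is_monoid)
  have "coord x i \<in> centraliser (A i) (coord u i)"
    using coord.centraliser_image_subset[OF assms(1)] x by blast
  then have "coord x i \<in> centraliser (A i) (coord u i [^]\<^bsub>A i\<^esub> m)"
    using Ai.centraliser_subset_centraliser_nat_pow[OF coord.hom_closed[OF assms(1)]] by blast
  then have "coord x i \<otimes>\<^bsub>A i\<^esub> coord u i [^]\<^bsub>A i\<^esub> m = coord u i [^]\<^bsub>A i\<^esub> m \<otimes>\<^bsub>A i\<^esub> coord x i"
    by (simp add: centraliser_def)
  then have "\<phi> (x, \<one>\<^bsub>K\<^esub>) \<otimes>\<^bsub>product_group I A\<^esub> \<phi> q = \<phi> q \<otimes>\<^bsub>product_group I A\<^esub> \<phi> (x, \<one>\<^bsub>K\<^esub>)"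
    using commute_single_entry_iff[of I A, OF group_A assms(2) hom_in_carrier[OF hom_\<phi> xK]]
      coord.hom_closed[OF assms(1)] assms(4) by simp
  then show "x \<in> centraliser H (fst q)"
    using fst_mem_centraliser_if_images_commute[OF xK assms(3)] by simp
qed

lemma component_range_subset_centraliser:
  assumes "u \<in> carrier H" "i \<in> I" "k \<in> carrier K"
    and "\<phi> (\<one>\<^bsub>H\<^esub>, k) = single_entry I A i (coord u i [^]\<^bsub>A i\<^esub> (m::nat))"
  shows "(\<lambda>p. \<phi> p i) ` carrier (H \<times>\<times> K) \<subseteq> centraliser (A i) (coord u i [^]\<^bsub>A i\<^esub> m)"
proof
  interpret Ai: group "A i" using group_A[OF assms(2)] .
  interpret \<pi>: group_hom "H \<times>\<times> K" "A i" "\<lambda>p. \<phi> p i" using component_hom[OF assms(2)] .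
  define a where "a = coord u i [^]\<^bsub>A i\<^esub> m"
  have u: "(u, \<one>\<^bsub>K\<^esub>) \<in> carrier (H \<times>\<times> K)" using assms(1) group_K by (simp add: group.is_monoid)
  have a: "a \<in> carrier (A i)" using \<pi>.hom_closed[OF u] by (simp add: a_def)
  fix f assume "f \<in> (\<lambda>p. \<phi> p i) ` carrier (H \<times>\<times> K)"
  then obtain h' k' where hk: "h' \<in> carrier H" "k' \<in> carrier K" "f = \<phi> (h', k') i" by auto
  have h1: "(h', \<one>\<^bsub>K\<^esub>) \<in> carrier (H \<times>\<times> K)" and k1: "(\<one>\<^bsub>H\<^esub>, k') \<in> carrier (H \<times>\<times> K)"
    and k: "(\<one>\<^bsub>H\<^esub>, k) \<in> carrier (H \<times>\<times> K)"
    using hk assms(3) group_H group_K by (simp_all add: group.is_monoid)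
  \<comment> \<open>Split \<open>(h', k') = (h', 1)(1, k')\<close>: the first factor commutes with \<open>(1, k)\<close>, the second with \<open>(u, 1)\<close>.\<close>
  have "f = coord h' i \<otimes>\<^bsub>A i\<^esub> \<phi> (\<one>\<^bsub>H\<^esub>, k') i"
    using \<pi>.hom_mult[OF h1 k1] hk group_H group_K by (simp add: group.is_monoid)
  moreover have "(h', \<one>\<^bsub>K\<^esub>) \<otimes>\<^bsub>H \<times>\<times> K\<^esub> (\<one>\<^bsub>H\<^esub>, k) = (\<one>\<^bsub>H\<^esub>, k) \<otimes>\<^bsub>H \<times>\<times> K\<^esub> (h', \<one>\<^bsub>K\<^esub>)"
    using hk assms(3) group_H group_K by (simp add: group.is_monoid)
  then have "\<phi> (h', \<one>\<^bsub>K\<^esub>) \<otimes>\<^bsub>product_group I A\<^esub> \<phi> (\<one>\<^bsub>H\<^esub>, k)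
      = \<phi> (\<one>\<^bsub>H\<^esub>, k) \<otimes>\<^bsub>product_group I A\<^esub> \<phi> (h', \<one>\<^bsub>K\<^esub>)"
    using h1 k by (metis hom_\<phi> hom_mult)
  then have "coord h' i \<in> centraliser (A i) a"
    using commute_single_entry_iff[of I A, OF group_A assms(2) hom_in_carrier[OF hom_\<phi> h1] a]
      assms(4) \<pi>.hom_closed[OF h1] by (simp add: a_def centraliser_def)
  moreover have "(\<one>\<^bsub>H\<^esub>, k') \<in> centraliser (H \<times>\<times> K) (u, \<one>\<^bsub>K\<^esub>)"
    using hk assms(1) group_H group_K by (simp add: centraliser_def group.is_monoid)
  then have "\<phi> (\<one>\<^bsub>H\<^esub>, k') i \<in> centraliser (A i) (coord u i)"
    using \<pi>.centraliser_image_subset[OF u] by blast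
  then have "\<phi> (\<one>\<^bsub>H\<^esub>, k') i \<in> centraliser (A i) a"
    using Ai.centraliser_subset_centraliser_nat_pow[OF \<pi>.hom_closed[OF u]] unfolding a_def by blast
  ultimately show "f \<in> centraliser (A i) (coord u i [^]\<^bsub>A i\<^esub> m)"
    using subgroup.m_closed[OF Ai.centraliser_subgroup[OF a]] by (simp add: a_def)
qed

lemma coord_in_virtual_centre_if_single_entry_in_K:
  assumes "almost_stable_centralisers (A i)" "u \<in> carrier H" "i \<in> I" "m \<ge> 1" "k \<in> carrier K"
    and "\<phi> (\<one>\<^bsub>H\<^esub>, k) = single_entry I A i (coord u i [^]\<^bsub>A i\<^esub> (m::nat))"
  shows "coord u i \<in> virtual_centre (A i)"
proof -
  interpret Ai: group "A i" using group_A[OF assms(3)] .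
  have u_i: "coord u i \<in> carrier (A i)"
    using group_hom.hom_closed[OF coord_hom[OF assms(3)] assms(2)] .
  have "finite_index (centraliser (A i) (coord u i [^]\<^bsub>A i\<^esub> m)) (A i)"
    using Ai.finite_index_superset[OF finite_index_component_range[OF assms(3)]]
      Ai.centraliser_subgroup component_range_subset_centraliser[OF assms(2,3,5,6)] u_i by blast
  then have "coord u i [^]\<^bsub>A i\<^esub> m \<in> virtual_centre (A i)" using Ai.virtual_centre_iff u_i by blast
  then show ?thesis using Ai.virtual_centre_of_nat_pow[OF assms(1) u_i assms(4)] by blast
qed

lemma subgroup_coords_in_virtual_centre:
  "subgroup {h \<in> carrier H. \<forall>j\<in>I. j \<noteq> i \<longrightarrow> coord h j \<in> virtual_centre (A j)} H"
    (is "subgroup ?V H")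
proof -
  interpret H: group H by (rule group_H)
  have VZ: "subgroup (virtual_centre (A j)) (A j)" if "j \<in> I" for j
    using group.virtual_centre_subgroup[OF group_A[OF that]] .
  show ?thesis
  proof (rule H.subgroupI)
    have "\<one>\<^bsub>H\<^esub> \<in> ?V"
      using group_hom.hom_one[OF coord_hom] subgroup.one_closed[OF VZ] by simp
    then show "?V \<noteq> {}" by blast
    show "inv\<^bsub>H\<^esub> h \<in> ?V" if "h \<in> ?V" for h
      using that group_hom.hom_inv[OF coord_hom] subgroup.m_inv_closed[OF VZ] by simp
    show "g \<otimes>\<^bsub>H\<^esub> h \<in> ?V" if "g \<in> ?V" "h \<in> ?V" for g h
      using that group_hom.hom_mult[OF coord_hom] subgroup.m_closed[OF VZ] by simp
  qed blast
qed

end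

locale IMC_finite_index_embedding = finite_index_embedding +
  fixes S
  assumes IMC: "IMC_generating_set H S"
    and stable: "\<And>i. i \<in> I \<Longrightarrow> almost_stable_centralisers (A i)"
begin

lemma generators_carrier: "S \<subseteq> carrier H"
  using IMC by (simp add: IMC_generating_set_def)

lemma centraliser_eq_centraliser_fst:
  assumes "s \<in> S" "i \<in> I" "coord s i \<notin> virtual_centre (A i)" "m \<ge> 1" "q \<in> carrier (H \<times>\<times> K)"
    and "\<phi> q = single_entry I A i (coord s i [^]\<^bsub>A i\<^esub> (m::nat))"
  shows "centraliser H s = centraliser H (fst q)"
proof -
  have s: "s \<in> carrier H" using assms(1) generators_carrier by blast
  have "fst q \<noteq> \<one>\<^bsub>H\<^esub>"
  proof
    assume "fst q = \<one>\<^bsub>H\<^esub>"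
    then have "\<phi> (\<one>\<^bsub>H\<^esub>, snd q) = single_entry I A i (coord s i [^]\<^bsub>A i\<^esub> m)"
      using assms(6) by (metis prod.collapse)
    then show False
      using coord_in_virtual_centre_if_single_entry_in_K[OF stable[OF assms(2)] s assms(2,4)] assms(3,5)
      by (auto simp: mem_Times_iff)
  qed
  moreover have "centraliser H s \<subseteq> centraliser H (fst q)"
    using centraliser_subset_centraliser_fst[OF s assms(2,5,6)] .
  moreover have "fst q \<in> carrier H" using assms(5) by (auto simp: mem_Times_iff)
  ultimately show ?thesis
    using IMC assms(1) unfolding IMC_generating_set_def by blast
qed

lemma fst_mem_centraliser_generator:
  assumes "s \<in> S" "i \<in> I" "coord s i \<notin> virtual_centre (A i)" "m \<ge> 1"
    and "coord s i [^]\<^bsub>A i\<^esub> (m::nat) \<in> slice i"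
    and "y \<in> carrier (H \<times>\<times> K)" "\<phi> y i \<in> centraliser (A i) (coord s i [^]\<^bsub>A i\<^esub> m)"
  shows "fst y \<in> centraliser H s"
proof -
  obtain q where q: "q \<in> carrier (H \<times>\<times> K)" "\<phi> q = single_entry I A i (coord s i [^]\<^bsub>A i\<^esub> m)"
    using assms(5) unfolding slice_def by auto
  have "\<phi> y i \<otimes>\<^bsub>A i\<^esub> coord s i [^]\<^bsub>A i\<^esub> m = coord s i [^]\<^bsub>A i\<^esub> m \<otimes>\<^bsub>A i\<^esub> \<phi> y i"
    using assms(7) by (simp add: centraliser_def)
  then have "\<phi> y \<otimes>\<^bsub>product_group I A\<^esub> \<phi> q = \<phi> q \<otimes>\<^bsub>product_group I A\<^esub> \<phi> y"
    using commute_single_entry_iff[of I A, OF group_A assms(2) hom_in_carrier[OF hom_\<phi> assms(6)]]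
      assms(5) q(2) by (simp add: slice_def)
  then show ?thesis
    using fst_mem_centraliser_if_images_commute[OF assms(6) q(1)]
      centraliser_eq_centraliser_fst[OF assms(1-4) q] by simp
qed

lemma non_virtually_central_coords_same_index:
  assumes "s \<in> S" "t \<in> S" "s \<noteq> t" "i \<in> I" "l \<in> I"
    and "coord s i \<notin> virtual_centre (A i)" "coord t l \<notin> virtual_centre (A l)"
  shows "l = i"
proof (rule ccontr)
  assume "l \<noteq> i"
  have s: "s \<in> carrier H" and t: "t \<in> carrier H" using assms(1,2) generators_carrier by blast+
  obtain m :: nat where m: "m \<ge> 1" "coord s i [^]\<^bsub>A i\<^esub> m \<in> slice i"
    using group.finite_index_nat_pow[OF group_A finite_index_slice] assms(4)
      group_hom.hom_closed[OF coord_hom s] by blast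
  obtain n :: nat where n: "n \<ge> 1" "coord t l [^]\<^bsub>A l\<^esub> n \<in> slice l"
    using group.finite_index_nat_pow[OF group_A finite_index_slice] assms(5)
      group_hom.hom_closed[OF coord_hom t] by blast
  then obtain q where q: "q \<in> carrier (H \<times>\<times> K)" "\<phi> q = single_entry I A l (coord t l [^]\<^bsub>A l\<^esub> n)"
    unfolding slice_def by auto
  have "\<phi> q i = \<one>\<^bsub>A i\<^esub>" using q(2) \<open>l \<noteq> i\<close> assms(4) by simp
  moreover have "coord s i [^]\<^bsub>A i\<^esub> m \<in> carrier (A i)" using m(2) by (simp add: slice_def)
  ultimately have "\<phi> q i \<in> centraliser (A i) (coord s i [^]\<^bsub>A i\<^esub> m)"
    using subgroup.one_closed[OF group.centraliser_subgroup[OF group_A[OF assms(4)]]] by simp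
  then have "fst q \<in> centraliser H s"
    using fst_mem_centraliser_generator[OF assms(1,4,6) m q(1)] by blast
  then have "s \<in> centraliser H (fst q)"
    using group.mem_centraliser_sym[OF group_H s] q(1) by (auto simp: mem_Times_iff)
  also have "\<dots> = centraliser H t"
    using centraliser_eq_centraliser_fst[OF assms(2,5,7) n(1) q] by simp
  finally show False using group.IMC_generating_set_not_centraliser[OF group_H IMC assms(1-3)] by blast
qed

lemma non_virtually_central_coord_propagates:
  assumes "s \<in> S" "t \<in> S" "s \<noteq> t" "i \<in> I" "coord s i \<notin> virtual_centre (A i)"
  shows "coord t i \<notin> virtual_centre (A i)"
proof
  assume "coord t i \<in> virtual_centre (A i)"
  interpret Ai: group "A i" using group_A[OF assms(4)] .
  have s: "s \<in> carrier H" and t: "t \<in> carrier H" using assms(1,2) generators_carrier by blast+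
  have s_i: "coord s i \<in> carrier (A i)" and t_i: "coord t i \<in> carrier (A i)"
    using group_hom.hom_closed[OF coord_hom[OF assms(4)]] s t by blast+
  have "finite_index (slice i \<inter> centraliser (A i) (coord t i)) (A i)"
    using Ai.finite_index_Int[OF finite_index_slice[OF assms(4)]] Ai.virtual_centre_iff
      \<open>coord t i \<in> virtual_centre (A i)\<close> by blast
  then obtain m :: nat where m: "m \<ge> 1" "coord s i [^]\<^bsub>A i\<^esub> m \<in> slice i"
      "coord s i [^]\<^bsub>A i\<^esub> m \<in> centraliser (A i) (coord t i)"
    using Ai.finite_index_nat_pow s_i by blast
  then have "coord t i \<in> centraliser (A i) (coord s i [^]\<^bsub>A i\<^esub> m)"
    using Ai.mem_centraliser_sym s_i t_i by blast
  moreover have "(t, \<one>\<^bsub>K\<^esub>) \<in> carrier (H \<times>\<times> K)" using t group_K by (simp add: group.is_monoid)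
  ultimately have "t \<in> centraliser H s"
    using fst_mem_centraliser_generator[OF assms(1,4,5) m(1,2)] by fastforce
  then show False
    using group.IMC_generating_set_not_centraliser[OF group_H IMC assms(2,1)] assms(3) by blast
qed

lemma exists_index_generators_coords_in_virtual_centre:
  assumes "s\<^sub>0 \<in> S" "t\<^sub>0 \<in> S" "s\<^sub>0 \<noteq> t\<^sub>0"
  shows "\<exists>i\<in>I. \<forall>s\<in>S. \<forall>j\<in>I. j \<noteq> i \<longrightarrow> coord s j \<in> virtual_centre (A j)"
proof (cases "\<exists>s\<in>S. \<exists>i\<in>I. coord s i \<notin> virtual_centre (A i)")
  case True
  then obtain s i where s: "s \<in> S" "i \<in> I" "coord s i \<notin> virtual_centre (A i)" by blast
  have "coord w j \<in> virtual_centre (A j)" if w: "w \<in> S" "j \<in> I" "j \<noteq> i" for w j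
  proof (rule ccontr)
    assume w_j: "coord w j \<notin> virtual_centre (A j)"
    obtain t where t: "t \<in> S" "t \<noteq> w" using assms by blast
    show False
    proof (cases "s = w")
      case True
      then have "coord t j \<notin> virtual_centre (A j)"
        using non_virtually_central_coord_propagates[OF w(1) t(1) t(2)[symmetric] w(2) w_j] by blast
      then show False
        using non_virtually_central_coords_same_index[OF s(1) t(1) _ s(2) w(2) s(3)] True t(2) w(3)
        by blast
    next
      case False
      then show False
        using non_virtually_central_coords_same_index[OF s(1) w(1) False s(2) w(2) s(3) w_j] w(3)
        by blast
    qed
  qed
  then show ?thesis using s(2) by blast
next
  case False
  have "I \<noteq> {}"
  proof
    assume "I = {}"
    \<comment> \<open>then the product group is trivial, so \<open>\<phi>\<close> cannot separate two generators\<close>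
    have "(s\<^sub>0, \<one>\<^bsub>K\<^esub>) \<in> carrier (H \<times>\<times> K)" "(t\<^sub>0, \<one>\<^bsub>K\<^esub>) \<in> carrier (H \<times>\<times> K)"
      using assms(1,2) generators_carrier group_K by (auto simp: group.is_monoid)
    moreover from this have "\<phi> (s\<^sub>0, \<one>\<^bsub>K\<^esub>) = \<phi> (t\<^sub>0, \<one>\<^bsub>K\<^esub>)"
      using hom_in_carrier[OF hom_\<phi>] \<open>I = {}\<close> by fastforce
    ultimately show False using inj_onD[OF inj_\<phi>] assms(3) by blast
  qed
  then show ?thesis using False by blast
qed

theorem exists_index_coords_in_virtual_centre:
  assumes "\<not> cyclic_group H"
  shows "\<exists>i\<in>I. \<forall>h\<in>carrier H. \<forall>j\<in>I. j \<noteq> i \<longrightarrow> coord h j \<in> virtual_centre (A j)"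
proof -
  obtain s\<^sub>0 t\<^sub>0 where "s\<^sub>0 \<in> S" "t\<^sub>0 \<in> S" "s\<^sub>0 \<noteq> t\<^sub>0"
    using group.IMC_generating_set_two_elements[OF group_H assms IMC] by blast
  then obtain i where i: "i \<in> I" "\<forall>s\<in>S. \<forall>j\<in>I. j \<noteq> i \<longrightarrow> coord s j \<in> virtual_centre (A j)"
    using exists_index_generators_coords_in_virtual_centre by blast
  then have "S \<subseteq> {h \<in> carrier H. \<forall>j\<in>I. j \<noteq> i \<longrightarrow> coord h j \<in> virtual_centre (A j)}"
    using generators_carrier by blast
  then have "generate H S \<subseteq> {h \<in> carrier H. \<forall>j\<in>I. j \<noteq> i \<longrightarrow> coord h j \<in> virtual_centre (A j)}"
    by (rule group.generate_subgroup_incl[OF group_H _ subgroup_coords_in_virtual_centre])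
  moreover have "generate H S = carrier H" using IMC by (simp add: IMC_generating_set_def)
  ultimately show ?thesis using i(1) by blast
qed

end

theorem lemma3p5:
  fixes H :: "('h, 'c) monoid_scheme" and K :: "('k, 'd) monoid_scheme"
    and A :: "nat \<Rightarrow> ('a, 'e) monoid_scheme" and n :: nat
    and \<phi> :: "'h \<times> 'k \<Rightarrow> (nat \<Rightarrow> 'a)"
  assumes "group H" and "group K" and "\<And>i. i \<in> {1..n} \<Longrightarrow> group (A i)"
    and "\<phi> \<in> hom (H \<times>\<times> K) (product_group {1..n} A)"
    and "inj_on \<phi> (carrier (H \<times>\<times> K))"
    and "finite_index (\<phi> ` carrier (H \<times>\<times> K)) (product_group {1..n} A)"
    and "\<And>i. i \<in> {1..n} \<Longrightarrow> almost_stable_centralisers (A i)"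
    and "\<not> cyclic_group H"
    and "\<exists>S. IMC_generating_set H S"
  shows "\<exists>i \<in> {1..n}. \<forall>h \<in> carrier H.
           \<forall>j \<in> {1..n}. j \<noteq> i \<longrightarrow> \<phi> (h, \<one>\<^bsub>K\<^esub>) j \<in> virtual_centre (A j)"
proof -
  obtain S where "IMC_generating_set H S" using assms(9) by blast
  then interpret IMC_finite_index_embedding H K "{1..n}" A \<phi> S
    using assms(1-7)
    by (simp add: IMC_finite_index_embedding_def IMC_finite_index_embedding_axioms_def
        finite_index_embedding_def)
  show ?thesis using exists_index_coords_in_virtual_centre[OF assms(8)] .
qed

end
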